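(* Let $P$ be the Borel probability measure on $\mathbb{R}$ with density $f(x)=\frac32$ if $x\in J_1:=[0,\frac13]$, $f(x)=\frac94$ if $x\in J_2\cup J_3$ where $J_2:=[\frac23,\frac79]$ and $J_3:=[\frac89,1]$, and $f(x)=0$ otherwise. Let $n\ge3$ and let $\alpha_n$ be an optimal set of $n$-means for $P$. Then: (i) $\alpha_n\cap J_i\neq\emptyset$ for all $1\le i\le3$; (ii) $\alpha_n$ contains no point of the open intervals $(\frac13,\frac23)$ and $(\frac79,\frac89)$; (iii) for $1\le i\neq j\le3$, the Voronoi region of any point of $\alpha_n\cap J_i$ contains no point of $J_j$.
   Context: An optimal set of $n$-means for $P$ is a set $\alpha\subset\mathbb{R}$ with $\mathrm{card}(\alpha)\le n$ attaining $\inf\{\int\min_{a\in\alpha}(x-a)^2\,dP(x):\mathrm{card}(\alpha)\le n\}$. For a finite $\alpha$ and $a\in\alpha$, the Voronoi region of $a$ is $M(a|\alpha)=\{x\in\mathbb{R}:|x-a|=\min_{b\in\alpha}|x-b|\}$. *)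

theory Defs
  imports "HOL-Analysis.Analysis"
begin

definition J :: "nat \<Rightarrow> real set" where
  "J i = (if i = 1 then {0..1/3} else if i = 2 then {2/3..7/9} else if i = 3 then {8/9..1} else {})"

definition dens :: "real \<Rightarrow> real" where
  "dens x = (if x \<in> J 1 then 3/2 else if x \<in> J 2 \<union> J 3 then 9/4 else 0)"

definition P :: "real measure" where
  "P = density lborel (\<lambda>x. ennreal (dens x))"

definition distortion :: "real set \<Rightarrow> ennreal" where
  "distortion \<alpha> = (\<integral>\<^sup>+ x. ennreal (Min ((\<lambda>a. (x - a)^2) ` \<alpha>)) \<partial>P)"

definition optimal_n_means :: "nat \<Rightarrow> real set \<Rightarrow> bool" where
  "optimal_n_means n \<alpha> \<longleftrightarrow> finite \<alpha> \<and> \<alpha> \<noteq> {} \<and> card \<alpha> \<le> n \<and>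
     (\<forall>\<beta>. finite \<beta> \<and> \<beta> \<noteq> {} \<and> card \<beta> \<le> n \<longrightarrow> distortion \<alpha> \<le> distortion \<beta>)"

definition voronoi :: "real \<Rightarrow> real set \<Rightarrow> real set" where
  "voronoi a \<alpha> = {x. \<bar>x - a\<bar> = Min ((\<lambda>b. \<bar>x - b\<bar>) ` \<alpha>)}"

end

theory Submission
  imports Defs
begin

(* The distortion is a weighted sum of the errors of a set S over J 1, J 2, J 3, the error over
   an interval [s, t] of length L being the integral of the squared distance to S.  If exactly
   N >= 1 points of S lie in the window (s - L/2, t + L/2), this error is at least that of N equally
   spaced points, L^3/(12 N^2), strictly so if one of those points is within L/(2N) of the boundary
   of [s, t]; an empty window costs at least 7 L^3/12.  Comparing an optimal set with unions of
   equally spaced points shows that each window contains one of its points (for n = 3 with the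
   help of explicit bounds when a single point must serve both J 2 and J 3), that the windows
   contain all of its points, and that it attains the grid bound on every J i.  So every point lies
   at distance at least L/(2N) inside its J i, which gives (i) and (ii); for x in J j the point of
   the optimal set in J j is then nearer than L_j, which does not exceed the gap between J j and
   any other J i, and this gives (iii). *)

section \<open>Squared distance to a finite set\<close>

definition min_sqdist :: "real set \<Rightarrow> real \<Rightarrow> real" where
  "min_sqdist S x = Min ((\<lambda>a. (x - a)^2) ` S)"

lemma min_sqdist_le: "finite S \<Longrightarrow> a \<in> S \<Longrightarrow> min_sqdist S x \<le> (x - a)^2"
  unfolding min_sqdist_def by (rule Min_le) auto

lemma min_sqdist_attained:
  assumes "finite S" "S \<noteq> {}"
  obtains a where "a \<in> S" "min_sqdist S x = (x - a)^2"
proof -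
  have "min_sqdist S x \<in> (\<lambda>a. (x - a)^2) ` S"
    unfolding min_sqdist_def using assms by (intro Min_in) auto
  then show ?thesis using that by blast
qed

lemma min_sqdist_nonneg: "finite S \<Longrightarrow> S \<noteq> {} \<Longrightarrow> 0 \<le> min_sqdist S x"
  by (metis min_sqdist_attained zero_le_power2)

lemma sq_le_min_sqdist:
  assumes "finite S" "S \<noteq> {}" "0 \<le> d" "\<And>a. a \<in> S \<Longrightarrow> d \<le> \<bar>x - a\<bar>"
  shows "d^2 \<le> min_sqdist S x"
proof -
  obtain a where "a \<in> S" "min_sqdist S x = (x - a)^2"
    using min_sqdist_attained assms(1,2) .
  then show ?thesis using assms(3,4) by (metis power2_abs power_mono)
qed

lemma continuous_on_min_sqdist: "finite S \<Longrightarrow> S \<noteq> {} \<Longrightarrow> continuous_on A (min_sqdist S)"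
proof (induction S rule: finite_ne_induct)
  case (singleton a)
  then show ?case by (simp add: min_sqdist_def continuous_intros)
next
  case (insert a S)
  have "min_sqdist (insert a S) = (\<lambda>x. min ((x - a)^2) (min_sqdist S x))"
    using insert by (auto simp: min_sqdist_def fun_eq_iff)
  then show ?case using insert by (auto intro!: continuous_intros)
qed

lemma min_sqdist_integrable: "finite S \<Longrightarrow> S \<noteq> {} \<Longrightarrow> min_sqdist S integrable_on {a..b}"
  by (intro integrable_continuous_real continuous_on_min_sqdist)

lemma integral_min_sqdist_nonneg:
  "finite S \<Longrightarrow> S \<noteq> {} \<Longrightarrow> 0 \<le> integral {a..b} (min_sqdist S)"
  using min_sqdist_integrable min_sqdist_nonneg by (intro integral_nonneg) auto

lemma integral_min_sqdist_combine:
  "finite S \<Longrightarrow> S \<noteq> {} \<Longrightarrow> a \<le> c \<Longrightarrow> c \<le> b \<Longrightarrow>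
    integral {a..c} (min_sqdist S) + integral {c..b} (min_sqdist S) = integral {a..b} (min_sqdist S)"
  by (intro Henstock_Kurzweil_Integration.integral_combine min_sqdist_integrable)

lemma integral_min_sqdist_ge:
  assumes "finite S" "S \<noteq> {}" "(f has_integral I) {a..b}"
    and "\<And>x. x \<in> {a..b} \<Longrightarrow> f x \<le> min_sqdist S x"
  shows "I \<le> integral {a..b} (min_sqdist S)"
  using has_integral_le[OF assms(3) _ assms(4)] min_sqdist_integrable[OF assms(1,2)]
  by (simp add: integrable_integral)

lemma has_integral_power2_shift:
  fixes a b p :: real
  assumes "a \<le> b"
  shows "((\<lambda>x. (x - p)^2) has_integral ((b - p)^3 - (a - p)^3)/3) {a..b}"
proof -
  have "((\<lambda>x. (x - p)^3/3) has_vector_derivative (x - p)^2) (at x within {a..b})" for x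
    unfolding has_real_derivative_iff_has_vector_derivative[symmetric]
    by (auto intro!: derivative_eq_intros simp: power2_eq_square)
  from fundamental_theorem_of_calculus[OF assms this] show ?thesis
    by (simp add: diff_divide_distrib)
qed

lemma integral_min_sqdist_ge_point:
  assumes "finite S" "S \<noteq> {}" "a \<le> b"
    and "\<And>x c. x \<in> {a..b} \<Longrightarrow> c \<in> S \<Longrightarrow> \<bar>x - q\<bar> \<le> \<bar>x - c\<bar>"
  shows "((b - q)^3 - (a - q)^3)/3 \<le> integral {a..b} (min_sqdist S)"
proof (rule integral_min_sqdist_ge[OF assms(1,2) has_integral_power2_shift[OF assms(3)]])
  fix x assume "x \<in> {a..b}"
  then show "(x - q)^2 \<le> min_sqdist S x"
    using sq_le_min_sqdist[OF assms(1,2), of "\<bar>x - q\<bar>"] assms(4) by simp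
qed

lemma integral_min_sqdist_le_point:
  assumes "finite S" "q \<in> S" "a \<le> b"
  shows "integral {a..b} (min_sqdist S) \<le> ((b - q)^3 - (a - q)^3)/3"
proof -
  have "(min_sqdist S has_integral integral {a..b} (min_sqdist S)) {a..b}"
    using min_sqdist_integrable[OF assms(1)] assms(2) by (auto simp: integrable_integral)
  from has_integral_le[OF this has_integral_power2_shift[OF assms(3)]] show ?thesis
    using min_sqdist_le[OF assms(1,2)] by blast
qed

section \<open>Lower bounds for the error on an interval\<close>

lemma cubic_cell_bound:
  fixes h y z :: real
  assumes z: "-(h/2) \<le> z" "z \<le> h/2" and y: "-(h/2) \<le> y" "y \<le> h/2"
  shows "-(h^3/6) \<le> (y^3 - z^3)/3 - h^2/4 * (y - z)"
    and "-(h/2) < z \<or> y < h/2 \<Longrightarrow> -(h^3/6) < (y^3 - z^3)/3 - h^2/4 * (y - z)"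
proof -
  have eq: "(y^3 - z^3)/3 - h^2/4 * (y - z) + h^3/6
      = (2*y - h)^2 * (y + h)/12 + (2*z + h)^2 * (h - z)/12"
    by (simp add: power2_eq_square power3_eq_cube field_simps)
  have Y: "0 \<le> (2*y - h)^2 * (y + h)/12" and Z: "0 \<le> (2*z + h)^2 * (h - z)/12"
    using y z by auto
  then show "-(h^3/6) \<le> (y^3 - z^3)/3 - h^2/4 * (y - z)" using eq by linarith
  assume "-(h/2) < z \<or> y < h/2"
  then have "0 < (2*y - h)^2 * (y + h)/12 \<or> 0 < (2*z + h)^2 * (h - z)/12"
  proof
    assume "-(h/2) < z"
    then have "0 < (2*z + h)^2" "0 < h - z" using z by auto
    then show ?thesis by simp
  next
    assume "y < h/2"
    then have "0 < (2*y - h)^2" "0 < y + h" using y by auto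
    then show ?thesis by simp
  qed
  then show "-(h^3/6) < (y^3 - z^3)/3 - h^2/4 * (y - z)" using eq Y Z by linarith
qed

(* Below min_sqdist S lies h^2/4 plus the sum of the dips of the points of S; integrating, each
   point contributes at least -h^3/6, with equality only if [p - h/2, p + h/2] lies in [s, t]. *)

definition dip :: "real \<Rightarrow> real \<Rightarrow> real \<Rightarrow> real" where
  "dip h p x = (if \<bar>x - p\<bar> \<le> h/2 then (x - p)^2 - h^2/4 else 0)"

lemma dip_nonpos: "dip h p x \<le> 0"
proof (cases "\<bar>x - p\<bar> \<le> h/2")
  case True
  then have "\<bar>x - p\<bar>^2 \<le> (h/2)^2" by (intro power_mono) auto
  then show ?thesis using True by (simp add: dip_def power_divide)
qed (simp add: dip_def)

definition cell_integral :: "real \<Rightarrow> real \<Rightarrow> real \<Rightarrow> real \<Rightarrow> real" where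
  "cell_integral s t h p =
     ((min t (p + h/2) - p)^3 - (max s (p - h/2) - p)^3)/3
       - h^2/4 * (min t (p + h/2) - max s (p - h/2))"

lemma has_integral_dip:
  assumes "s \<le> t" "s - h/2 < p" "p < t + h/2" "0 < h"
  shows "(dip h p has_integral cell_integral s t h p) {s..t}"
proof -
  define u v where "u = max s (p - h/2)" and "v = min t (p + h/2)"
  have uv: "s \<le> u" "u \<le> v" "v \<le> t" using assms by (auto simp: u_def v_def)
  have "((\<lambda>x. (x - p)^2 - h^2/4) has_integral
      ((v - p)^3 - (u - p)^3)/3 - h^2/4 * (v - u)) {u..v}"
    using has_integral_diff[OF has_integral_power2_shift[OF uv(2), of p]
        has_integral_const_real[of "h^2/4" u v]] uv(2)
    by (simp add: algebra_simps)
  then have "((\<lambda>x. (x - p)^2 - h^2/4) has_integral cell_integral s t h p) {u..v}"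
    by (simp add: cell_integral_def u_def v_def)
  then have "((\<lambda>x. if x \<in> {u..v} then (x - p)^2 - h^2/4 else 0) has_integral
      cell_integral s t h p) {s..t}"
    using uv by (subst has_integral_restrict) auto
  moreover have "x \<in> {u..v} \<longleftrightarrow> \<bar>x - p\<bar> \<le> h/2" if "x \<in> {s..t}" for x
  proof -
    have "x \<in> {u..v} \<longleftrightarrow> p - h/2 \<le> x \<and> x \<le> p + h/2"
      using that by (auto simp: u_def v_def)
    also have "\<dots> \<longleftrightarrow> \<bar>x - p\<bar> \<le> h/2" by arith
    finally show ?thesis .
  qed
  ultimately show ?thesis
    by (auto simp: dip_def intro: has_integral_eq[rotated])
qed

lemma cell_integral_ge:
  assumes "s - h/2 < p" "p < t + h/2" "0 < h"
  shows "-(h^3/6) \<le> cell_integral s t h p"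
    and "p < s + h/2 \<or> t - h/2 < p \<Longrightarrow> -(h^3/6) < cell_integral s t h p"
proof -
  define z y where "z = max s (p - h/2) - p" and "y = min t (p + h/2) - p"
  have zy: "-(h/2) \<le> z" "z \<le> h/2" "-(h/2) \<le> y" "y \<le> h/2"
    using assms by (auto simp: z_def y_def max_def min_def)
  have eq: "cell_integral s t h p = (y^3 - z^3)/3 - h^2/4 * (y - z)"
    by (simp add: cell_integral_def z_def y_def)
  show "-(h^3/6) \<le> cell_integral s t h p"
    unfolding eq by (rule cubic_cell_bound(1)[OF zy])
  assume "p < s + h/2 \<or> t - h/2 < p"
  then have "-(h/2) < z \<or> y < h/2" by (auto simp: z_def y_def)
  then show "-(h^3/6) < cell_integral s t h p"
    unfolding eq by (rule cubic_cell_bound(2)[OF zy])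
qed

lemma min_sqdist_ge_dips:
  assumes S: "finite S" "S \<noteq> {}" and "x \<in> {s..t}" "0 < h"
  shows "h^2/4 + (\<Sum>p\<in>S \<inter> {s - h/2<..<t + h/2}. dip h p x) \<le> min_sqdist S x"
proof -
  define A where "A = S \<inter> {s - h/2<..<t + h/2}"
  have finA: "finite A" using S by (simp add: A_def)
  obtain q where q: "q \<in> S" "min_sqdist S x = (x - q)^2"
    using min_sqdist_attained S .
  show ?thesis
  proof (cases "\<bar>x - q\<bar> < h/2")
    case True
    then have "x - h/2 < q" "q < x + h/2" by arith+
    then have "q \<in> A" using q(1) assms(3) by (auto simp: A_def)
    then have "(\<Sum>p\<in>A. dip h p x) = dip h q x + (\<Sum>p\<in>A - {q}. dip h p x)"
      using finA by (simp add: sum.remove)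
    also have "\<dots> \<le> dip h q x"
      using sum_nonpos[of "A - {q}" "\<lambda>p. dip h p x"] dip_nonpos by simp
    also have "\<dots> = (x - q)^2 - h^2/4" using True by (simp add: dip_def)
    finally show ?thesis using q(2) unfolding A_def by linarith
  next
    case False
    then have "(h/2)^2 \<le> \<bar>x - q\<bar>^2" using assms(4) by (intro power_mono) auto
    moreover have "(\<Sum>p\<in>A. dip h p x) \<le> 0" by (intro sum_nonpos dip_nonpos)
    ultimately show ?thesis using q(2) unfolding A_def by (simp add: power_divide)
  qed
qed

lemma integral_min_sqdist_ge_cells:
  assumes S: "finite S" "S \<noteq> {}" and "s \<le> t" "0 < h"
    and card: "card (S \<inter> {s - h/2<..<t + h/2}) \<le> k"
  shows "h^2 * (t - s)/4 - k * (h^3/6) \<le> integral {s..t} (min_sqdist S)"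
    and "\<exists>p\<in>S \<inter> {s - h/2<..<t + h/2}. p < s + h/2 \<or> t - h/2 < p \<Longrightarrow>
      h^2 * (t - s)/4 - k * (h^3/6) < integral {s..t} (min_sqdist S)"
proof -
  define A where "A = S \<inter> {s - h/2<..<t + h/2}"
  have finA: "finite A" using S by (simp add: A_def)
  have "((\<lambda>x. h^2/4) has_integral (h^2 * (t - s)/4)) {s..t}"
    using has_integral_const_real[of "h^2/4" s t] \<open>s \<le> t\<close> by (simp add: algebra_simps)
  moreover have "((\<lambda>x. \<Sum>p\<in>A. dip h p x) has_integral (\<Sum>p\<in>A. cell_integral s t h p)) {s..t}"
    using \<open>s \<le> t\<close> \<open>0 < h\<close>
    by (intro has_integral_sum[OF finA] has_integral_dip) (auto simp: A_def)
  ultimately have "((\<lambda>x. h^2/4 + (\<Sum>p\<in>A. dip h p x)) has_integral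
      (h^2 * (t - s)/4 + (\<Sum>p\<in>A. cell_integral s t h p))) {s..t}"
    by (rule has_integral_add)
  then have lower: "h^2 * (t - s)/4 + (\<Sum>p\<in>A. cell_integral s t h p)
      \<le> integral {s..t} (min_sqdist S)"
    by (rule integral_min_sqdist_ge[OF S]) (use min_sqdist_ge_dips[OF S _ \<open>0 < h\<close>] A_def in auto)
  have cell: "-(h^3/6) \<le> cell_integral s t h p" if "p \<in> A" for p
    using cell_integral_ge(1) that \<open>0 < h\<close> by (auto simp: A_def)
  have count: "k * (h^3/6) \<ge> card A * (h^3/6)"
    using card \<open>0 < h\<close> by (intro mult_right_mono) (auto simp: A_def)
  have "(\<Sum>p\<in>A. -(h^3/6)) \<le> (\<Sum>p\<in>A. cell_integral s t h p)"
    by (rule sum_mono[OF cell])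
  then have "-(card A * (h^3/6)) \<le> (\<Sum>p\<in>A. cell_integral s t h p)"
    by simp
  then show "h^2 * (t - s)/4 - k * (h^3/6) \<le> integral {s..t} (min_sqdist S)"
    using lower count by linarith
  assume "\<exists>p\<in>S \<inter> {s - h/2<..<t + h/2}. p < s + h/2 \<or> t - h/2 < p"
  then obtain p where p: "p \<in> A" "p < s + h/2 \<or> t - h/2 < p" by (auto simp: A_def)
  have "-(h^3/6) < cell_integral s t h p"
    using cell_integral_ge(2) p \<open>0 < h\<close> by (auto simp: A_def)
  then have "(\<Sum>p\<in>A. -(h^3/6)) < (\<Sum>p\<in>A. cell_integral s t h p)"
    using cell p(1) by (intro sum_strict_mono_ex1[OF finA]) auto
  then have "-(card A * (h^3/6)) < (\<Sum>p\<in>A. cell_integral s t h p)"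
    by simp
  then show "h^2 * (t - s)/4 - k * (h^3/6) < integral {s..t} (min_sqdist S)"
    using lower count by linarith
qed

definition window :: "real \<Rightarrow> real \<Rightarrow> real set" where
  "window s t = {s - (t - s)/2<..<t + (t - s)/2}"

definition core :: "real \<Rightarrow> real \<Rightarrow> nat \<Rightarrow> real set" where
  "core s t N = {s + (t - s)/(2 * N)..t - (t - s)/(2 * N)}"

lemma subset_window:
  assumes "h \<le> t - s"
  shows "{s - h/2<..<t + h/2} \<subseteq> window s t"
proof -
  have "s - (t - s)/2 \<le> s - h/2" "t + h/2 \<le> t + (t - s)/2"
    using assms by (simp_all add: field_simps)
  then show ?thesis
    unfolding window_def by (intro subsetI; simp; linarith)
qed

lemma integral_min_sqdist_ge_occupied:
  assumes S: "finite S" "S \<noteq> {}" and "s < t"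
    and N: "card (S \<inter> window s t) = N" "1 \<le> N"
  shows "(t - s)^3/(12 * (real N)^2) \<le> integral {s..t} (min_sqdist S)"
    and "p \<in> S \<inter> window s t - core s t N \<Longrightarrow>
      (t - s)^3/(12 * (real N)^2) < integral {s..t} (min_sqdist S)"
proof -
  define h where "h = (t - s)/N"
  have "1 * (t - s) \<le> N * (t - s)"
    using \<open>s < t\<close> N(2) by (intro mult_right_mono) auto
  then have h: "0 < h" "h \<le> t - s"
    using \<open>s < t\<close> N(2) by (auto simp: h_def field_simps)
  define W where "W = {s - h/2<..<t + h/2}"
  have sub: "S \<inter> W \<subseteq> S \<inter> window s t"
    using subset_window[OF h(2)] by (auto simp: W_def)
  have card: "card (S \<inter> W) \<le> N"
    using card_mono[OF _ sub] S N(1) by simp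
  have eq: "h^2 * (t - s)/4 - N * (h^3/6) = (t - s)^3/(12 * (real N)^2)"
    using N(2) by (simp add: h_def power2_eq_square power3_eq_cube field_simps)
  show "(t - s)^3/(12 * (real N)^2) \<le> integral {s..t} (min_sqdist S)"
    using integral_min_sqdist_ge_cells(1)[OF S _ h(1) card[unfolded W_def]] \<open>s < t\<close> eq
    by simp
  assume p: "p \<in> S \<inter> window s t - core s t N"
  show "(t - s)^3/(12 * (real N)^2) < integral {s..t} (min_sqdist S)"
  proof (cases "p \<in> W")
    case True
    have "p < s + h/2 \<or> t - h/2 < p"
      using p by (auto simp: core_def h_def)
    then have "h^2 * (t - s)/4 - N * (h^3/6) < integral {s..t} (min_sqdist S)"
      using \<open>s < t\<close> p True
      by (intro integral_min_sqdist_ge_cells(2)[OF S _ h(1) card[unfolded W_def]])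
         (auto simp: W_def)
    then show ?thesis using eq by simp
  next
    case False
    then have "S \<inter> W \<subset> S \<inter> window s t" using sub p by auto
    then have "card (S \<inter> W) < card (S \<inter> window s t)"
      using S(1) by (intro psubset_card_mono) auto
    then have "card (S \<inter> W) \<le> N - 1" using N(1) by linarith
    from integral_min_sqdist_ge_cells(1)[OF S _ h(1) this[unfolded W_def]] \<open>s < t\<close>
    have "h^2 * (t - s)/4 - real (N - 1) * (h^3/6) \<le> integral {s..t} (min_sqdist S)"
      by simp
    moreover have "real (N - 1) * (h^3/6) = N * (h^3/6) - h^3/6"
      using N(2) by (simp add: of_nat_diff left_diff_distrib)
    moreover have "0 < h^3" using h(1) by simp
    ultimately show ?thesis using eq by linarith
  qed
qed

lemma integral_min_sqdist_ge_empty: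
  assumes S: "finite S" "S \<noteq> {}" and "s \<le> t" and empty: "S \<inter> window s t = {}"
  shows "7 * (t - s)^3/12 \<le> integral {s..t} (min_sqdist S)"
proof -
  define m p0 p1 where "m = (s + t)/2" and "p0 = s - (t - s)/2" and "p1 = t + (t - s)/2"
  have far: "c \<le> p0 \<or> p1 \<le> c" if "c \<in> S" for c
    using empty that by (force simp: window_def p0_def p1_def)
  have "((m - p0)^3 - (s - p0)^3)/3 \<le> integral {s..m} (min_sqdist S)"
  proof (rule integral_min_sqdist_ge_point[OF S])
    fix x c :: real assume "x \<in> {s..m}" "c \<in> S"
    then have "s \<le> x" "x \<le> m" "c \<le> p0 \<or> p1 \<le> c" using far by auto
    then show "\<bar>x - p0\<bar> \<le> \<bar>x - c\<bar>"
      using \<open>s \<le> t\<close> unfolding m_def p0_def p1_def by (auto simp: abs_if field_simps)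
  qed (use \<open>s \<le> t\<close> in \<open>simp add: m_def\<close>)
  moreover have "((t - p1)^3 - (m - p1)^3)/3 \<le> integral {m..t} (min_sqdist S)"
  proof (rule integral_min_sqdist_ge_point[OF S])
    fix x c :: real assume "x \<in> {m..t}" "c \<in> S"
    then have "m \<le> x" "x \<le> t" "c \<le> p0 \<or> p1 \<le> c" using far by auto
    then show "\<bar>x - p1\<bar> \<le> \<bar>x - c\<bar>"
      using \<open>s \<le> t\<close> unfolding m_def p0_def p1_def by (auto simp: abs_if field_simps)
  qed (use \<open>s \<le> t\<close> in \<open>simp add: m_def\<close>)
  moreover have "integral {s..m} (min_sqdist S) + integral {m..t} (min_sqdist S)
      = integral {s..t} (min_sqdist S)"
    using \<open>s \<le> t\<close> by (intro integral_min_sqdist_combine[OF S]) (auto simp: m_def)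
  moreover have "((m - p0)^3 - (s - p0)^3)/3 + ((t - p1)^3 - (m - p1)^3)/3 = 7 * (t - s)^3/12"
    by (simp add: m_def p0_def p1_def power3_eq_cube field_simps)
  ultimately show ?thesis by linarith
qed

lemma core_subset:
  assumes "s < t" "1 \<le> N"
  shows "core s t N \<subseteq> {s<..<t}"
proof -
  have "0 < (t - s)/(2 * N)" using assms by simp
  then show ?thesis by (auto simp: core_def)
qed

lemma dist_core_less:
  assumes "s < t" "1 \<le> N" "p \<in> core s t N" "x \<in> {s..t}"
  shows "\<bar>x - p\<bar> < t - s"
proof -
  have "0 < (t - s)/(2 * N)" using assms(1,2) by simp
  then show ?thesis using assms(3,4) by (auto simp: core_def abs_if)
qed

section \<open>Equally spaced points\<close>

definition grid :: "real \<Rightarrow> real \<Rightarrow> nat \<Rightarrow> real set" where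
  "grid s t k = (\<lambda>j. s + (real j + 1/2) * ((t - s)/k)) ` {..<k}"

lemma finite_grid: "finite (grid s t k)"
  by (simp add: grid_def)

lemma card_grid_le: "card (grid s t k) \<le> k"
  unfolding grid_def using card_image_le[of "{..<k}"] by simp

lemma grid_nonempty: "1 \<le> k \<Longrightarrow> grid s t k \<noteq> {}"
  by (auto simp: grid_def lessThan_empty_iff)

lemma integral_min_sqdist_le_grid:
  assumes S: "finite S" "grid s t k \<subseteq> S" and "s \<le> t" "1 \<le> k"
  shows "integral {s..t} (min_sqdist S) \<le> (t - s)^3/(12 * (real k)^2)"
proof -
  define h where "h = (t - s)/k"
  have "0 \<le> h" using assms by (simp add: h_def)
  have "S \<noteq> {}" using S(2) grid_nonempty[OF \<open>1 \<le> k\<close>] by blast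
  have cell: "integral {s + j*h..s + (j + 1)*h} (min_sqdist S) \<le> h^3/12" if "j < k" for j :: nat
  proof -
    have "s + (real j + 1/2) * h \<in> S"
      using S(2) that by (auto simp: grid_def h_def)
    from integral_min_sqdist_le_point[OF S(1) this, of "s + j*h" "s + (j + 1)*h"] \<open>0 \<le> h\<close>
    show ?thesis by (simp add: power3_eq_cube field_simps)
  qed
  have "integral {s..s + j*h} (min_sqdist S) \<le> j * (h^3/12)" if "j \<le> k" for j :: nat
    using that
  proof (induction j)
    case (Suc j)
    have "integral {s..s + Suc j * h} (min_sqdist S)
        = integral {s..s + j*h} (min_sqdist S) + integral {s + j*h..s + (j + 1)*h} (min_sqdist S)"
      using \<open>0 \<le> h\<close> integral_min_sqdist_combine[OF S(1) \<open>S \<noteq> {}\<close>, of s "s + j*h" "s + (j + 1)*h"]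
      by (simp add: algebra_simps)
    then show ?case using Suc cell[of j] by (simp add: algebra_simps)
  qed simp
  from this[of k] have "integral {s..t} (min_sqdist S) \<le> k * (h^3/12)"
    using \<open>1 \<le> k\<close> by (simp add: h_def)
  also have "\<dots> = (t - s)^3/(12 * (real k)^2)"
    using \<open>1 \<le> k\<close> by (simp add: h_def power2_eq_square power3_eq_cube field_simps)
  finally show ?thesis .
qed

section \<open>The three intervals\<close>

definition lo :: "nat \<Rightarrow> real" where
  "lo i = (if i = 1 then 0 else if i = 2 then 2/3 else 8/9)"

definition hi :: "nat \<Rightarrow> real" where
  "hi i = (if i = 1 then 1/3 else if i = 2 then 7/9 else 1)"

definition wt :: "nat \<Rightarrow> real" where
  "wt i = (if i = 1 then 3/2 else 9/4)"

lemma J_eq: "i \<in> {1, 2, 3} \<Longrightarrow> J i = {lo i..hi i}"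
  by (auto simp: J_def lo_def hi_def)

lemma lo_less_hi: "lo i < hi i"
  by (simp add: lo_def hi_def)

lemma wt_pos: "0 < wt i"
  by (simp add: wt_def)

lemma region_gap:
  assumes "i \<in> {1, 2, 3}" "j \<in> {1, 2, 3}" "i \<noteq> j" "x \<in> J j" "a \<in> J i"
  shows "hi j - lo j \<le> \<bar>x - a\<bar>"
  using assms by (auto simp: J_def lo_def hi_def abs_if)

lemma windows_disjoint:
  "window (lo 1) (hi 1) \<inter> window (lo 2) (hi 2) = {}"
  "(window (lo 1) (hi 1) \<union> window (lo 2) (hi 2)) \<inter> window (lo 3) (hi 3) = {}"
  by (auto simp: window_def lo_def hi_def)

definition err :: "real set \<Rightarrow> nat \<Rightarrow> real" where
  "err S i = wt i * integral {lo i..hi i} (min_sqdist S)"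

definition cost :: "real set \<Rightarrow> real" where
  "cost S = err S 1 + err S 2 + err S 3"

lemma err_nonneg: "finite S \<Longrightarrow> S \<noteq> {} \<Longrightarrow> 0 \<le> err S i"
  unfolding err_def using wt_pos integral_min_sqdist_nonneg by (simp add: less_imp_le)

lemma nn_integral_indicator_eq_integral:
  fixes f :: "real \<Rightarrow> real"
  assumes "continuous_on {a..b} f" "\<And>x. 0 \<le> f x"
  shows "(\<integral>\<^sup>+ x. ennreal (f x) * indicator {a..b} x \<partial>lborel) = ennreal (integral {a..b} f)"
  using assms by (intro nn_integral_has_integral_lebesgue' integrable_integral
      integrable_continuous_interval) auto

lemma distortion_eq_cost:
  assumes S: "finite S" "S \<noteq> {}"
  shows "distortion S = ennreal (cost S)"
proof -
  have cont: "continuous_on A (min_sqdist S)" for A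
    by (rule continuous_on_min_sqdist[OF S])
  then have [measurable]: "min_sqdist S \<in> borel_measurable borel"
    by (simp add: borel_measurable_continuous_onI)
  have nonneg: "0 \<le> c * min_sqdist S x" if "0 \<le> c" for c x
    using that min_sqdist_nonneg[OF S] by simp
  have dens_eq: "dens x = wt 1 * indicator {lo 1..hi 1} x + wt 2 * indicator {lo 2..hi 2} x
      + wt 3 * indicator {lo 3..hi 3} x" for x
    by (auto simp: dens_def J_def lo_def hi_def wt_def indicator_def)
  have "distortion S = (\<integral>\<^sup>+ x. ennreal (dens x) * ennreal (min_sqdist S x) \<partial>lborel)"
    unfolding distortion_def P_def min_sqdist_def[symmetric]
    by (subst nn_integral_density) (auto simp: dens_eq)
  also have "\<dots> = (\<integral>\<^sup>+ x. ennreal (wt 1 * min_sqdist S x) * indicator {lo 1..hi 1} x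
      + ennreal (wt 2 * min_sqdist S x) * indicator {lo 2..hi 2} x
      + ennreal (wt 3 * min_sqdist S x) * indicator {lo 3..hi 3} x \<partial>lborel)"
    using min_sqdist_nonneg[OF S] wt_pos
    by (intro nn_integral_cong)
       (auto simp: dens_def J_def lo_def hi_def wt_def indicator_def ennreal_mult'[symmetric] mult.commute)
  also have "\<dots> = ennreal (err S 1) + ennreal (err S 2) + ennreal (err S 3)"
    using nn_integral_indicator_eq_integral[OF continuous_on_mult_left[OF cont] nonneg] wt_pos
    by (simp add: nn_integral_add less_imp_le err_def)
  also have "\<dots> = ennreal (cost S)"
    using err_nonneg[OF S] by (simp add: cost_def ennreal_plus)
  finally show ?thesis .
qed

lemma cost_le_of_optimal:
  assumes "optimal_n_means n \<alpha>" "finite \<beta>" "\<beta> \<noteq> {}" "card \<beta> \<le> n"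
  shows "cost \<alpha> \<le> cost \<beta>"
proof -
  have \<alpha>: "finite \<alpha>" "\<alpha> \<noteq> {}" using assms(1) by (auto simp: optimal_n_means_def)
  have "distortion \<alpha> \<le> distortion \<beta>" using assms by (auto simp: optimal_n_means_def)
  then have "ennreal (cost \<alpha>) \<le> ennreal (cost \<beta>)"
    by (simp add: distortion_eq_cost[OF \<alpha>] distortion_eq_cost[OF assms(2,3)])
  moreover have "0 \<le> cost \<beta>" using err_nonneg[OF assms(2,3)] by (simp add: cost_def)
  ultimately show ?thesis by (simp add: ennreal_le_iff)
qed

definition unit_err :: "nat \<Rightarrow> real" where
  "unit_err i = wt i * (hi i - lo i)^3/12"

lemma unit_err_simps: "unit_err 1 = 1/216" "unit_err 2 = 1/3888" "unit_err 3 = 1/3888"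
  by (simp_all add: unit_err_def wt_def lo_def hi_def power3_eq_cube)

definition grid_cost :: "nat \<Rightarrow> nat \<Rightarrow> nat \<Rightarrow> real" where
  "grid_cost k1 k2 k3 = unit_err 1/(real k1)^2 + unit_err 2/(real k2)^2 + unit_err 3/(real k3)^2"

lemma cost_le_grid_cost:
  assumes opt: "optimal_n_means n \<alpha>"
    and k: "1 \<le> k1" "1 \<le> k2" "1 \<le> k3" "k1 + k2 + k3 \<le> n"
  shows "cost \<alpha> \<le> grid_cost k1 k2 k3"
proof -
  define \<beta> where "\<beta> = grid (lo 1) (hi 1) k1 \<union> grid (lo 2) (hi 2) k2 \<union> grid (lo 3) (hi 3) k3"
  have fin: "finite \<beta>" by (simp add: \<beta>_def finite_grid)
  have ne: "\<beta> \<noteq> {}" using grid_nonempty[OF k(1)] by (simp add: \<beta>_def)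
  have "card \<beta> \<le> card (grid (lo 1) (hi 1) k1) + card (grid (lo 2) (hi 2) k2)
      + card (grid (lo 3) (hi 3) k3)"
    unfolding \<beta>_def by (meson card_Un_le add_right_mono order_trans)
  also have "\<dots> \<le> n" using card_grid_le k(4) by (meson add_mono order_trans)
  finally have card: "card \<beta> \<le> n" .
  have "err \<beta> i \<le> unit_err i/(real k)^2"
    if "grid (lo i) (hi i) k \<subseteq> \<beta>" "1 \<le> k" for i k
  proof -
    have "integral {lo i..hi i} (min_sqdist \<beta>) \<le> (hi i - lo i)^3/(12 * (real k)^2)"
      using integral_min_sqdist_le_grid[OF fin that(1)] lo_less_hi that(2) by (simp add: less_imp_le)
    then have "err \<beta> i \<le> wt i * ((hi i - lo i)^3/(12 * (real k)^2))"
      unfolding err_def using wt_pos[of i] by (intro mult_left_mono) auto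
    then show ?thesis by (simp add: unit_err_def)
  qed
  then have "cost \<beta> \<le> grid_cost k1 k2 k3"
    unfolding cost_def grid_cost_def using k by (intro add_mono) (auto simp: \<beta>_def)
  then show ?thesis using cost_le_of_optimal[OF opt fin ne card] by linarith
qed

section \<open>Counting points near the intervals\<close>

definition occupancy_bound :: "real \<Rightarrow> nat \<Rightarrow> real" where
  "occupancy_bound c N = (if N = 0 then 7 * c else c/(real N)^2)"

lemma occupancy_bound_nonneg: "0 \<le> c \<Longrightarrow> 0 \<le> occupancy_bound c N"
  by (simp add: occupancy_bound_def)

lemma err_ge_occupancy_bound:
  assumes S: "finite S" "S \<noteq> {}"
  shows "occupancy_bound (unit_err i) (card (S \<inter> window (lo i) (hi i))) \<le> err S i"
proof -
  define N where "N = card (S \<inter> window (lo i) (hi i))"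
  have "occupancy_bound ((hi i - lo i)^3/12) N \<le> integral {lo i..hi i} (min_sqdist S)"
  proof (cases "N = 0")
    case True
    then have "S \<inter> window (lo i) (hi i) = {}" using S(1) by (simp add: N_def)
    then show ?thesis
      using integral_min_sqdist_ge_empty[OF S] lo_less_hi True
      by (simp add: occupancy_bound_def less_imp_le)
  next
    case False
    then show ?thesis
      using integral_min_sqdist_ge_occupied(1)[OF S lo_less_hi N_def[symmetric]]
      by (simp add: occupancy_bound_def)
  qed
  then have "wt i * occupancy_bound ((hi i - lo i)^3/12) N \<le> err S i"
    unfolding err_def using wt_pos[of i] by (intro mult_left_mono) auto
  moreover have "occupancy_bound (unit_err i) N = wt i * occupancy_bound ((hi i - lo i)^3/12) N"
    by (simp add: occupancy_bound_def unit_err_def)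
  ultimately show ?thesis by (simp add: N_def)
qed

lemma err_gt_off_core:
  assumes S: "finite S" "S \<noteq> {}"
    and N: "card (S \<inter> window (lo i) (hi i)) = N" "1 \<le> N"
    and p: "p \<in> S \<inter> window (lo i) (hi i) - core (lo i) (hi i) N"
  shows "unit_err i/(real N)^2 < err S i"
proof -
  have "(hi i - lo i)^3/(12 * (real N)^2) < integral {lo i..hi i} (min_sqdist S)"
    by (rule integral_min_sqdist_ge_occupied(2)[OF S lo_less_hi N p])
  then have "wt i * ((hi i - lo i)^3/(12 * (real N)^2)) < err S i"
    unfolding err_def using wt_pos[of i] by (intro mult_strict_left_mono) auto
  then show ?thesis by (simp add: unit_err_def)
qed

(* Needed only for n = 3: when two points serve J 1, at most one point lies to the right of 1/2. *)

lemma err_right_ge_near: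
  assumes S: "finite S" "S \<noteq> {}" and q: "1/2 \<le> q" "q \<le> 5/6"
    and left: "\<And>a. a \<in> S \<Longrightarrow> a < 1/2 \<or> a = q"
  shows "26/3888 \<le> err S 2 + err S 3"
proof -
  have closest: "\<bar>x - q\<bar> \<le> \<bar>x - c\<bar>" if "2/3 \<le> x" "c \<in> S" for x c
    using left[OF that(2)] q that(1) by (auto simp: abs_if)
  have "((7/9 - q)^3 - (2/3 - q)^3)/3 \<le> integral {2/3..7/9} (min_sqdist S)"
    by (rule integral_min_sqdist_ge_point[OF S]) (use closest in auto)
  moreover have "((1 - q)^3 - (8/9 - q)^3)/3 \<le> integral {8/9..1} (min_sqdist S)"
    by (rule integral_min_sqdist_ge_point[OF S]) (use closest in auto)
  moreover have "((7/9 - q)^3 - (2/3 - q)^3)/3 + ((1 - q)^3 - (8/9 - q)^3)/3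
      = 13/4374 + 2/9 * (q - 5/6)^2"
    by (simp add: power2_eq_square power3_eq_cube field_simps)
  moreover have "0 \<le> 2/9 * (q - 5/6)^2" by simp
  ultimately have "13/4374 \<le> integral {2/3..7/9} (min_sqdist S) + integral {8/9..1} (min_sqdist S)"
    by linarith
  then show ?thesis by (simp add: err_def wt_def lo_def hi_def)
qed

lemma err_right_ge_mid:
  assumes S: "finite S" "S \<noteq> {}" and q: "5/6 < q" "q \<le> 8/9"
    and left: "\<And>a. a \<in> S \<Longrightarrow> a < 1/2 \<or> a = q"
  shows "17/3888 \<le> err S 2 + err S 3"
proof -
  have "((7/9 - 5/6)^3 - (2/3 - 5/6)^3)/3 \<le> integral {2/3..7/9} (min_sqdist S)"
  proof (rule integral_min_sqdist_ge_point[OF S])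
    fix x c :: real assume "x \<in> {2/3..7/9}" "c \<in> S"
    then show "\<bar>x - 5/6\<bar> \<le> \<bar>x - c\<bar>" using left[of c] q by (auto simp: abs_if)
  qed simp
  moreover have "((1 - 8/9)^3 - (8/9 - 8/9)^3)/3 \<le> integral {8/9..1} (min_sqdist S)"
  proof (rule integral_min_sqdist_ge_point[OF S])
    fix x c :: real assume "x \<in> {8/9..1}" "c \<in> S"
    then show "\<bar>x - 8/9\<bar> \<le> \<bar>x - c\<bar>" using left[of c] q by (auto simp: abs_if)
  qed simp
  ultimately show ?thesis by (simp add: err_def wt_def lo_def hi_def power3_eq_cube)
qed

lemma err_right_ge_far:
  assumes S: "finite S" "S \<noteq> {}" and q: "8/9 < q"
    and left: "\<And>a. a \<in> S \<Longrightarrow> a < 1/2 \<or> a = q"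
  shows "17/3888 \<le> err S 2 + err S 3"
proof -
  have "((\<lambda>x. (1/6::real)^2) has_integral (1/6)^2 * (13/18 - 2/3)) {2/3..13/18::real}"
    using has_integral_const_real[of "(1/6::real)^2" "2/3" "13/18"] by simp
  then have "(1/6)^2 * (13/18 - 2/3) \<le> integral {2/3..13/18} (min_sqdist S)"
  proof (rule integral_min_sqdist_ge[OF S])
    fix x :: real assume x: "x \<in> {2/3..13/18}"
    show "(1/6)^2 \<le> min_sqdist S x"
    proof (rule sq_le_min_sqdist[OF S])
      fix c assume "c \<in> S"
      then show "1/6 \<le> \<bar>x - c\<bar>" using left[of c] q x by (auto simp: abs_if)
    qed simp
  qed
  moreover have "((7/9 - 8/9)^3 - (13/18 - 8/9)^3)/3 \<le> integral {13/18..7/9} (min_sqdist S)"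
  proof (rule integral_min_sqdist_ge_point[OF S])
    fix x c :: real assume "x \<in> {13/18..7/9}" "c \<in> S"
    then show "\<bar>x - 8/9\<bar> \<le> \<bar>x - c\<bar>" using left[of c] q by (auto simp: abs_if)
  qed simp
  moreover have "integral {2/3..13/18} (min_sqdist S) + integral {13/18..7/9} (min_sqdist S)
      = integral {2/3..7/9} (min_sqdist S)"
    by (rule integral_min_sqdist_combine[OF S]) auto
  moreover have "0 \<le> integral {8/9..1} (min_sqdist S)"
    by (rule integral_min_sqdist_nonneg[OF S])
  ultimately show ?thesis by (simp add: err_def wt_def lo_def hi_def power2_eq_square power3_eq_cube)
qed

lemma err_right_ge_single:
  assumes S: "finite S" "S \<noteq> {}" and left: "\<And>a. a \<in> S \<Longrightarrow> a < 1/2 \<or> a = q"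
  shows "17/3888 \<le> err S 2 + err S 3"
proof -
  consider "q < 1/2" | "1/2 \<le> q" "q \<le> 5/6" | "5/6 < q" "q \<le> 8/9" | "8/9 < q" by linarith
  then show ?thesis
  proof cases
    case 1
    then have "a < 1/2 \<or> a = 1/2" if "a \<in> S" for a using left[OF that] by auto
    then show ?thesis using err_right_ge_near[OF S, of "1/2"] by simp
  next
    case 2
    then show ?thesis using err_right_ge_near[OF S _ _ left] by simp
  next
    case 3
    then show ?thesis using err_right_ge_mid[OF S _ _ left] by simp
  next
    case 4
    then show ?thesis using err_right_ge_far[OF S _ left] by simp
  qed
qed

lemma err_right_ge_empty:
  assumes S: "finite S" "S \<noteq> {}" and left: "\<And>a. a \<in> S \<Longrightarrow> a < 1/2"
  shows "26/3888 \<le> err S 2 + err S 3"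
  using err_right_ge_near[OF S, of "1/2"] left by simp

lemma grid_cost_eq:
  "grid_cost k1 k2 k3 = 1/216/(real k1)^2 + 1/3888/(real k2)^2 + 1/3888/(real k3)^2"
  unfolding grid_cost_def unit_err_simps ..

lemma grid_cost_swap: "grid_cost k1 k2 k3 = grid_cost k1 k3 k2"
  by (simp add: grid_cost_eq)

lemma first_region_occupied:
  fixes X1 X2 X3 :: real
  assumes ub: "X1 + X2 + X3 \<le> grid_cost 1 1 1"
    and lb: "occupancy_bound (1/216) N1 \<le> X1" "occupancy_bound (1/3888) N2 \<le> X2"
      "occupancy_bound (1/3888) N3 \<le> X3"
  shows "1 \<le> N1"
proof (rule ccontr)
  assume "\<not> 1 \<le> N1"
  then have "7/216 \<le> X1" using lb(1) by (simp add: occupancy_bound_def)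
  moreover have "0 \<le> X2" "0 \<le> X3"
    using order_trans[OF occupancy_bound_nonneg lb(2)] order_trans[OF occupancy_bound_nonneg lb(3)]
    by simp_all
  ultimately show False using ub by (simp add: grid_cost_eq)
qed

lemma second_region_occupied_three:
  fixes X1 X2 X3 :: real
  assumes N: "N1 + N2 + N3 \<le> 3" "1 \<le> N1"
    and ub: "X1 + X2 + X3 \<le> grid_cost 1 1 1"
    and lb: "occupancy_bound (1/216) N1 \<le> X1" "occupancy_bound (1/3888) N2 \<le> X2" "0 \<le> X3"
    and two: "N1 = 2 \<Longrightarrow> 17/3888 \<le> X2 + X3"
    and three: "N1 = 3 \<Longrightarrow> 26/3888 \<le> X2 + X3"
  shows "1 \<le> N2"
proof (rule ccontr)
  assume "\<not> 1 \<le> N2"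
  then have X2: "7/3888 \<le> X2" using lb(2) by (simp add: occupancy_bound_def)
  have X1: "1/216/(real N1)^2 \<le> X1" using lb(1) N(2) by (simp add: occupancy_bound_def)
  have ub: "X1 + X2 + X3 \<le> 20/3888" using ub by (simp add: grid_cost_eq)
  have "N1 = 1 \<or> N1 = 2 \<or> N1 = 3" using N by linarith
  then show False
  proof (elim disjE)
    assume "N1 = 1"
    then show False using X1 X2 lb(3) ub by simp
  next
    assume "N1 = 2"
    then show False using X1 two ub by simp
  next
    assume "N1 = 3"
    then show False using X1 three ub by simp
  qed
qed

(* If no point is near J 2, its error is at least 7/3888; a grid competitor that moves a spare
   point, or a point from J 3 or from a well-populated J 1, onto J 2 is cheaper. *)

lemma second_region_occupied:
  fixes X1 X2 X3 :: real
  assumes n: "3 \<le> n" "N1 + N2 + N3 \<le> n" and "1 \<le> N1"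
    and ub: "\<And>k1 k2 k3. 1 \<le> k1 \<Longrightarrow> 1 \<le> k2 \<Longrightarrow> 1 \<le> k3 \<Longrightarrow> k1 + k2 + k3 \<le> n \<Longrightarrow>
      X1 + X2 + X3 \<le> grid_cost k1 k2 k3"
    and lb: "occupancy_bound (1/216) N1 \<le> X1" "occupancy_bound (1/3888) N2 \<le> X2"
      "occupancy_bound (1/3888) N3 \<le> X3"
    and two: "n = 3 \<Longrightarrow> N1 = 2 \<Longrightarrow> 17/3888 \<le> X2 + X3"
    and three: "n = 3 \<Longrightarrow> N1 = 3 \<Longrightarrow> 26/3888 \<le> X2 + X3"
  shows "1 \<le> N2"
proof -
  have X1_nonneg: "0 \<le> X1" and X3: "0 \<le> X3"
    using order_trans[OF occupancy_bound_nonneg lb(1)] order_trans[OF occupancy_bound_nonneg lb(3)]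
    by simp_all
  show ?thesis
  proof (cases "n = 3")
    case True
    then show ?thesis
      using second_region_occupied_three[OF _ \<open>1 \<le> N1\<close> ub[of 1 1 1] lb(1,2) X3] n two three
      by simp
  next
    case False
    show ?thesis
    proof (rule ccontr)
      assume "\<not> 1 \<le> N2"
      then have X2: "7/3888 \<le> X2" using lb(2) by (simp add: occupancy_bound_def)
      have X1: "1/216/(real N1)^2 \<le> X1"
        using lb(1) \<open>1 \<le> N1\<close> by (simp add: occupancy_bound_def)
      consider "n - 1 \<le> N1" | "N1 + 2 \<le> n" "1 \<le> N3" "N1 + N3 + 1 \<le> n"
        | "N1 + 2 \<le> n" "\<not> (1 \<le> N3 \<and> N1 + N3 + 1 \<le> n)"
        by linarith
      then show False
      proof cases
        case 1
        then have "X1 + X2 + X3 \<le> grid_cost (n - 2) 1 1" using n False by (intro ub) auto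
        moreover have "(2::real)^2 \<le> (real (n - 2))^2" using n False by (intro power_mono) auto
        then have "1/216/(real (n - 2))^2 \<le> 1/216/4" by (intro divide_left_mono) auto
        ultimately show False using X1_nonneg X2 X3 by (simp add: grid_cost_eq)
      next
        case 2
        then have "X1 + X2 + X3 \<le> grid_cost N1 1 N3" using \<open>1 \<le> N1\<close> by (intro ub) auto
        moreover have "1/3888/(real N3)^2 \<le> X3"
          using lb(3) 2 by (simp add: occupancy_bound_def)
        ultimately show False using X1 X2 by (simp add: grid_cost_eq)
      next
        case 3
        then have "X1 + X2 + X3 \<le> grid_cost N1 1 1" using \<open>1 \<le> N1\<close> by (intro ub) auto
        then show False using X1 X2 X3 by (simp add: grid_cost_eq)
      qed
    qed
  qed
qed

lemma all_regions_occupied: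
  fixes X1 X2 X3 :: real
  assumes n: "3 \<le> n" "N1 + N2 + N3 \<le> n"
    and ub: "\<And>k1 k2 k3. 1 \<le> k1 \<Longrightarrow> 1 \<le> k2 \<Longrightarrow> 1 \<le> k3 \<Longrightarrow> k1 + k2 + k3 \<le> n \<Longrightarrow>
      X1 + X2 + X3 \<le> grid_cost k1 k2 k3"
    and lb: "occupancy_bound (1/216) N1 \<le> X1" "occupancy_bound (1/3888) N2 \<le> X2"
      "occupancy_bound (1/3888) N3 \<le> X3"
    and two: "n = 3 \<Longrightarrow> N1 = 2 \<Longrightarrow> 17/3888 \<le> X2 + X3"
    and three: "n = 3 \<Longrightarrow> N1 = 3 \<Longrightarrow> 26/3888 \<le> X2 + X3"
  shows "1 \<le> N1" "1 \<le> N2" "1 \<le> N3"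
proof -
  show N1: "1 \<le> N1"
    using first_region_occupied[OF ub[of 1 1 1] lb] n by simp
  show "1 \<le> N2"
    by (rule second_region_occupied[OF n N1 ub lb two three])
  show "1 \<le> N3"
  proof (rule second_region_occupied[of n N1 N3 N2 X1 X3 X2])
    fix k1 k2 k3 :: nat
    assume "1 \<le> k1" "1 \<le> k2" "1 \<le> k3" "k1 + k2 + k3 \<le> n"
    then have "X1 + X2 + X3 \<le> grid_cost k1 k3 k2" by (intro ub) auto
    then show "X1 + X3 + X2 \<le> grid_cost k1 k2 k3" using grid_cost_swap[of k1 k2 k3] by linarith
  qed (use n N1 lb two three in \<open>simp_all add: add.commute\<close>)
qed

section \<open>Optimal sets\<close>

lemma not_in_voronoi:
  assumes "finite \<alpha>" "b \<in> \<alpha>" "\<bar>x - b\<bar> < \<bar>x - a\<bar>"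
  shows "x \<notin> voronoi a \<alpha>"
proof
  assume "x \<in> voronoi a \<alpha>"
  then have "\<bar>x - a\<bar> \<le> \<bar>x - b\<bar>"
    using assms(1,2) by (auto simp: voronoi_def intro: Min_le)
  then show False using assms(3) by simp
qed

locale optimal_quantizer =
  fixes n :: nat and \<alpha> :: "real set"
  assumes n_ge_3: "3 \<le> n" and optimal: "optimal_n_means n \<alpha>"
begin

lemma finite_points: "finite \<alpha>" and points_nonempty: "\<alpha> \<noteq> {}"
  and card_points_le: "card \<alpha> \<le> n"
  using optimal by (auto simp: optimal_n_means_def)

definition occupancy :: "nat \<Rightarrow> nat" where
  "occupancy i = card (\<alpha> \<inter> window (lo i) (hi i))"

lemma occupancy_sum:
  "occupancy 1 + occupancy 2 + occupancy 3
    = card (\<alpha> \<inter> (window (lo 1) (hi 1) \<union> window (lo 2) (hi 2) \<union> window (lo 3) (hi 3)))"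
proof -
  have "card ((\<alpha> \<inter> window (lo 1) (hi 1) \<union> \<alpha> \<inter> window (lo 2) (hi 2)) \<union> \<alpha> \<inter> window (lo 3) (hi 3))
      = card (\<alpha> \<inter> window (lo 1) (hi 1) \<union> \<alpha> \<inter> window (lo 2) (hi 2)) + occupancy 3"
    unfolding occupancy_def
    by (rule card_Un_disjoint) (use finite_points windows_disjoint(2) in blast)+
  moreover have "card (\<alpha> \<inter> window (lo 1) (hi 1) \<union> \<alpha> \<inter> window (lo 2) (hi 2))
      = occupancy 1 + occupancy 2"
    unfolding occupancy_def
    by (rule card_Un_disjoint) (use finite_points windows_disjoint(1) in blast)+
  moreover have "\<alpha> \<inter> (window (lo 1) (hi 1) \<union> window (lo 2) (hi 2) \<union> window (lo 3) (hi 3))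
      = (\<alpha> \<inter> window (lo 1) (hi 1) \<union> \<alpha> \<inter> window (lo 2) (hi 2)) \<union> \<alpha> \<inter> window (lo 3) (hi 3)"
    by blast
  ultimately show ?thesis by simp
qed

lemma occupancy_sum_le: "occupancy 1 + occupancy 2 + occupancy 3 \<le> n"
  unfolding occupancy_sum using card_mono[OF finite_points, of "\<alpha> \<inter> _"] card_points_le
  by (meson inf_le1 order_trans)

lemma occupancy_bound_le_err: "occupancy_bound (unit_err i) (occupancy i) \<le> err \<alpha> i"
  unfolding occupancy_def by (rule err_ge_occupancy_bound[OF finite_points points_nonempty])

lemma three_means_right_err:
  shows "n = 3 \<Longrightarrow> occupancy 1 = 2 \<Longrightarrow> 17/3888 \<le> err \<alpha> 2 + err \<alpha> 3"
    and "n = 3 \<Longrightarrow> occupancy 1 = 3 \<Longrightarrow> 26/3888 \<le> err \<alpha> 2 + err \<alpha> 3"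
proof -
  have outside: "card (\<alpha> - window (lo 1) (hi 1)) = card \<alpha> - occupancy 1"
    unfolding occupancy_def using finite_points by (intro card_Diff_subset_Int) auto
  show "17/3888 \<le> err \<alpha> 2 + err \<alpha> 3" if "n = 3" "occupancy 1 = 2"
  proof -
    have "card (\<alpha> - window (lo 1) (hi 1)) \<le> 1"
      using that outside card_points_le by linarith
    then have "\<forall>a\<in>\<alpha> - window (lo 1) (hi 1). \<forall>b\<in>\<alpha> - window (lo 1) (hi 1). a = b"
      using card_le_Suc0_iff_eq[of "\<alpha> - window (lo 1) (hi 1)"] finite_points by simp
    then obtain q where q: "\<forall>a\<in>\<alpha> - window (lo 1) (hi 1). a = q" by blast
    have "a < 1/2 \<or> a = q" if "a \<in> \<alpha>" for a
      using q that by (auto simp: window_def lo_def hi_def)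
    then show ?thesis by (rule err_right_ge_single[OF finite_points points_nonempty])
  qed
  show "26/3888 \<le> err \<alpha> 2 + err \<alpha> 3" if "n = 3" "occupancy 1 = 3"
  proof -
    have "card (\<alpha> - window (lo 1) (hi 1)) = 0"
      using that outside card_points_le by linarith
    then have "a < 1/2" if "a \<in> \<alpha>" for a
      using that finite_points by (auto simp: window_def lo_def hi_def)
    then show ?thesis by (rule err_right_ge_empty[OF finite_points points_nonempty])
  qed
qed

lemma err_sum_le_grid_cost:
  "1 \<le> k1 \<Longrightarrow> 1 \<le> k2 \<Longrightarrow> 1 \<le> k3 \<Longrightarrow> k1 + k2 + k3 \<le> n \<Longrightarrow>
    err \<alpha> 1 + err \<alpha> 2 + err \<alpha> 3 \<le> grid_cost k1 k2 k3"
  using cost_le_grid_cost[OF optimal] by (simp add: cost_def)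

lemma occupancy_pos: "i \<in> {1, 2, 3} \<Longrightarrow> 1 \<le> occupancy i"
  using all_regions_occupied[OF n_ge_3 occupancy_sum_le err_sum_le_grid_cost
      occupancy_bound_le_err[of 1, unfolded unit_err_simps] occupancy_bound_le_err[of 2, unfolded unit_err_simps]
      occupancy_bound_le_err[of 3, unfolded unit_err_simps] three_means_right_err]
  by auto

lemma err_lower_bound: "i \<in> {1, 2, 3} \<Longrightarrow> unit_err i/(real (occupancy i))^2 \<le> err \<alpha> i"
  using occupancy_bound_le_err[of i] occupancy_pos[of i] by (simp add: occupancy_bound_def)

lemma grid_cost_occupancy_le_err_sum:
  "grid_cost (occupancy 1) (occupancy 2) (occupancy 3) \<le> err \<alpha> 1 + err \<alpha> 2 + err \<alpha> 3"
  unfolding grid_cost_def by (intro add_mono err_lower_bound) auto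

lemma in_windows:
  assumes "a \<in> \<alpha>"
  shows "a \<in> window (lo 1) (hi 1) \<union> window (lo 2) (hi 2) \<union> window (lo 3) (hi 3)"
proof (rule ccontr)
  assume "a \<notin> window (lo 1) (hi 1) \<union> window (lo 2) (hi 2) \<union> window (lo 3) (hi 3)"
  then have "card (\<alpha> \<inter> (window (lo 1) (hi 1) \<union> window (lo 2) (hi 2) \<union> window (lo 3) (hi 3)))
      < card \<alpha>"
    using finite_points assms by (intro psubset_card_mono) auto
  then have "(occupancy 1 + 1) + occupancy 2 + occupancy 3 \<le> n"
    using occupancy_sum card_points_le by linarith
  then have "err \<alpha> 1 + err \<alpha> 2 + err \<alpha> 3 \<le> grid_cost (occupancy 1 + 1) (occupancy 2) (occupancy 3)"
    using occupancy_pos by (intro err_sum_le_grid_cost) auto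
  moreover have "(real (occupancy 1))^2 < (real (occupancy 1 + 1))^2"
    by (intro power_strict_mono) auto
  then have "1/216/(real (occupancy 1 + 1))^2 < 1/216/(real (occupancy 1))^2"
    using occupancy_pos[of 1] by (intro divide_strict_left_mono) auto
  ultimately show False
    using grid_cost_occupancy_le_err_sum by (simp add: grid_cost_eq)
qed

lemma in_core:
  assumes i: "i \<in> {1, 2, 3}" and a: "a \<in> \<alpha> \<inter> window (lo i) (hi i)"
  shows "a \<in> core (lo i) (hi i) (occupancy i)"
proof (rule ccontr)
  assume "a \<notin> core (lo i) (hi i) (occupancy i)"
  then have "unit_err i/(real (occupancy i))^2 < err \<alpha> i"
    using a by (intro err_gt_off_core[OF finite_points points_nonempty _ occupancy_pos[OF i]])
       (auto simp: occupancy_def)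
  then have "(\<Sum>j\<in>{1, 2, 3}. unit_err j/(real (occupancy j))^2) < (\<Sum>j\<in>{1, 2, 3}. err \<alpha> j)"
    using i err_lower_bound by (intro sum_strict_mono_ex1) auto
  then have "grid_cost (occupancy 1) (occupancy 2) (occupancy 3) < err \<alpha> 1 + err \<alpha> 2 + err \<alpha> 3"
    by (simp add: grid_cost_def)
  moreover have "err \<alpha> 1 + err \<alpha> 2 + err \<alpha> 3 \<le> grid_cost (occupancy 1) (occupancy 2) (occupancy 3)"
    using occupancy_sum_le occupancy_pos by (intro err_sum_le_grid_cost) auto
  ultimately show False by linarith
qed

lemma core_point:
  assumes i: "i \<in> {1, 2, 3}"
  obtains b where "b \<in> \<alpha>" "b \<in> core (lo i) (hi i) (occupancy i)"
proof -
  have "\<alpha> \<inter> window (lo i) (hi i) \<noteq> {}"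
    using occupancy_pos[OF i] by (auto simp: occupancy_def)
  then show ?thesis using in_core[OF i] that by blast
qed

lemma in_open_region:
  assumes "a \<in> \<alpha>"
  obtains i where "i \<in> {1, 2, 3}" "a \<in> {lo i<..<hi i}"
proof -
  obtain i where i: "i \<in> {1, 2, 3}" and "a \<in> window (lo i) (hi i)"
    using in_windows[OF assms] by blast
  then have "a \<in> core (lo i) (hi i) (occupancy i)" using assms in_core by blast
  then show ?thesis using core_subset[OF lo_less_hi[of i] occupancy_pos[OF i]] i that by blast
qed

lemma meets_region:
  assumes i: "i \<in> {1, 2, 3}"
  shows "\<alpha> \<inter> J i \<noteq> {}"
proof -
  obtain b where b: "b \<in> \<alpha>" "b \<in> core (lo i) (hi i) (occupancy i)"
    using core_point[OF i] .
  then have "b \<in> {lo i<..<hi i}"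
    using core_subset[OF lo_less_hi[of i] occupancy_pos[OF i]] by blast
  then have "b \<in> J i" using J_eq[OF i] by simp
  then show ?thesis using b(1) by blast
qed

lemma avoids_gaps: "\<alpha> \<inter> ({1/3<..<2/3} \<union> {7/9<..<8/9}) = {}"
proof -
  have "a \<notin> {1/3<..<2/3} \<union> {7/9<..<8/9}" if a: "a \<in> \<alpha>" for a
  proof -
    obtain i where "i \<in> {1, 2, 3}" "a \<in> {lo i<..<hi i}"
      using in_open_region[OF a] .
    then show ?thesis by (auto simp: lo_def hi_def)
  qed
  then show ?thesis by blast
qed

lemma voronoi_avoids_region:
  assumes i: "i \<in> {1, 2, 3}" and j: "j \<in> {1, 2, 3}" "i \<noteq> j" and a: "a \<in> \<alpha> \<inter> J i"
  shows "voronoi a \<alpha> \<inter> J j = {}"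
proof -
  obtain b where b: "b \<in> \<alpha>" "b \<in> core (lo j) (hi j) (occupancy j)"
    using core_point[OF j(1)] .
  have "x \<notin> voronoi a \<alpha>" if x: "x \<in> J j" for x
  proof (rule not_in_voronoi[OF finite_points b(1)])
    have "\<bar>x - b\<bar> < hi j - lo j"
      using x b(2) J_eq[OF j(1)] by (intro dist_core_less[OF lo_less_hi occupancy_pos[OF j(1)]]) auto
    also have "\<dots> \<le> \<bar>x - a\<bar>" using region_gap[OF i j] x a by blast
    finally show "\<bar>x - b\<bar> < \<bar>x - a\<bar>" .
  qed
  then show ?thesis by blast
qed

end

theorem proposition5p7:
  fixes n :: nat and \<alpha> :: "real set"
  assumes "n \<ge> 3" and "optimal_n_means n \<alpha>"
  shows "(\<forall>i\<in>{1,2,3}. \<alpha> \<inter> J i \<noteq> {})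
       \<and> \<alpha> \<inter> ({1/3<..<2/3} \<union> {7/9<..<8/9}) = {}
       \<and> (\<forall>i\<in>{1,2,3}. \<forall>j\<in>{1,2,3}. i \<noteq> j \<longrightarrow>
            (\<forall>a\<in>\<alpha> \<inter> J i. voronoi a \<alpha> \<inter> J j = {}))"
proof -
  interpret optimal_quantizer n \<alpha>
    using assms by unfold_locales
  show ?thesis
  proof (intro conjI ballI impI)
    show "\<alpha> \<inter> J i \<noteq> {}" if "i \<in> {1, 2, 3}" for i
      using that by (rule meets_region)
    show "\<alpha> \<inter> ({1/3<..<2/3} \<union> {7/9<..<8/9}) = {}"
      by (rule avoids_gaps)
    show "voronoi a \<alpha> \<inter> J j = {}"
      if "i \<in> {1, 2, 3}" "j \<in> {1, 2, 3}" "i \<noteq> j" "a \<in> \<alpha> \<inter> J i" for i j a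
      using that by (rule voronoi_avoids_region)
  qed
qed

end
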